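(* Let $(X,d,\ll,\le,\tau)$ be a Lorentzian length space. Then: globally hyperbolic $\Rightarrow$ causally simple $\Rightarrow$ causally continuous $\Rightarrow$ stably causal. In addition, if $(X,d)$ is locally compact, then stably causal $\Rightarrow$ strongly causal.
   Context: A causal space $(X,\ll,\le)$ is a set $X$ with two transitive relations $\ll,\le$ such that $\le$ is reflexive and $x\ll y\Rightarrow x\le y$; write $p<q$ if $p\le q$ and $p\neq q$. Set $I^+(x)=\{y: x\ll y\}$, $I^-(x)=\{y: y\ll x\}$, $J^+(x)=\{y:x\le y\}$, $J^-(x)=\{y:y\le x\}$. A Lorentzian pre-length space $(X,d,\ll,\le,\tau)$ is a causal space together with a metric $d$ on $X$ and a function $\tau:X\times X\to[0,\infty]$ that is lower semicontinuous with respect to the topology of $d$, satisfies $\tau(x,z)\ge\tau(x,y)+\tau(y,z)$ whenever $x\le y\le z$, $\tau(x,y)=0$ if $x\not\le y$, and $\tau(x,y)>0\iff x\ll y$. All topological notions refer to the metric topology of $d$. A future directed causal (resp. timelike) curve is a non-constant Lipschitz map $\gamma:I\to X$ ($I\subset\mathbb R$ an interval) with $\gamma(s)\le\gamma(t)$ (resp. $\gamma(s)\ll\gamma(t)$) for all $s<t$. For a future directed causal $\gamma:[a,b]\to X$, $L_\tau(\gamma)=\inf\sum_{i=0}^{N-1}\tau(\gamma(t_i),\gamma(t_{i+1}))$ over all partitions $a=t_0<\dots<t_N=b$. The space is causally path connected if whenever $x\le y$ (resp. $x\ll y$) there is a future directed causal (resp. timelike) curve from $x$ to $y$. For open $U\subset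 X$, $p\le_U q$ means there is a future directed causal curve from $p$ to $q$ with image in $U$. A neighborhood $U$ is causally closed if whenever $p_n\le_U q_n$ with $p_n\to p\in U$, $q_n\to q\in U$, then $p\le_U q$; the space is locally causally closed if every point has a causally closed neighborhood. The space is localizable if every $x$ has a neighborhood $\Omega_x$ such that: (i) all causal curves contained in $\Omega_x$ have uniformly bounded $d$-length; (ii) there is a continuous $\omega_x:\Omega_x\times\Omega_x\to[0,\infty)$ such that $(\Omega_x,d|_{\Omega_x\times\Omega_x},\ll|_{\Omega_x},\le|_{\Omega_x},\omega_x)$ is a Lorentzian pre-length space, and $I^\pm(y)\cap\Omega_x\ne\emptyset$ for every $y\in\Omega_x$; (iii) for all $p,q\in\Omega_x$ with $p<q$ there is a future causal curve $\gamma_{p,q}$ from $p$ to $q$ with $L_\tau(\gamma_{p,q})\ge L_\tau(\gamma)$ for every future causal curve $\gamma\subset\Omega_x$ from $p$ to $q$, and $L_\tau(\gamma_{p,q})=\omega_x(p,q)$. A Lorentzian length space is a causally path connected, locally causally closed, localizable Lorentzian pre-length space with $\tau(x,y)=\sup\{L_\tau(\gamma):\gamma$ a future causal curve from $x$ to $y\}$. Causality notions: causal: $x\le y$, $y\le x\Rightarrow x=y$. Non-totally imprisoning: for every compact $K\subset X$ there is $C\ge0$ bounding the $d$-arclength of every causal curve contained in $K$. Globally hyperbolic: non-totally imprisoning and $J^+(x)\cap J^-(y)$ compact for all $x,y$. Causally simple: causal and $J^\pm(x)$ closed for all $x$. Distinguishing: $I^+(x)=I^+(y)\Rightarrow x=y$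 and $I^-(x)=I^-(y)\Rightarrow x=y$. Reflective: $I^+(x)\subset I^+(y)\Rightarrow I^-(y)\subset I^-(x)$ and $I^-(y)\subset I^-(x)\Rightarrow I^+(x)\subset I^+(y)$ for all $x,y$. Causally continuous: distinguishing and reflective. $K^+$: the smallest transitive, closed (in $X\times X$) relation containing $J^+=\{(x,y):x\le y\}$; stably causal: $K^+$ antisymmetric. Strongly causal: the Alexandrov topology (subbase $\{I^+(x)\cap I^-(y)\}$) coincides with the metric topology of $d$. *)

theory Defs
  imports "HOL-Analysis.Analysis" "HOL-Library.Extended_Nonnegative_Real"
begin

text \<open>Throughout: the point set X is the type 'a, the metric d is the metric dist
  of the type class metric_space.  The relations ll (timelike) and le (causal) are
  binary predicates, tau takes values in [0,\<infinity>] (ennreal).\<close>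

definition causal_space_on :: "'a set \<Rightarrow> ('a \<Rightarrow> 'a \<Rightarrow> bool) \<Rightarrow> ('a \<Rightarrow> 'a \<Rightarrow> bool) \<Rightarrow> bool" where
  "causal_space_on S ll le \<longleftrightarrow>
     (\<forall>x\<in>S. \<forall>y\<in>S. \<forall>z\<in>S. ll x y \<longrightarrow> ll y z \<longrightarrow> ll x z) \<and>
     (\<forall>x\<in>S. \<forall>y\<in>S. \<forall>z\<in>S. le x y \<longrightarrow> le y z \<longrightarrow> le x z) \<and>
     (\<forall>x\<in>S. le x x) \<and>
     (\<forall>x\<in>S. \<forall>y\<in>S. ll x y \<longrightarrow> le x y)"

definition lsc_on :: "('a::metric_space \<times> 'a) set \<Rightarrow> ('a \<times> 'a \<Rightarrow> ennreal) \<Rightarrow> bool" where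
  "lsc_on A f \<longleftrightarrow> (\<forall>z\<in>A. \<forall>c. c < f z \<longrightarrow>
      (\<exists>U. open U \<and> z \<in> U \<and> (\<forall>w\<in>U \<inter> A. c < f w)))"

definition lpls_on :: "'a::metric_space set \<Rightarrow> ('a \<Rightarrow> 'a \<Rightarrow> bool) \<Rightarrow> ('a \<Rightarrow> 'a \<Rightarrow> bool)
    \<Rightarrow> ('a \<Rightarrow> 'a \<Rightarrow> ennreal) \<Rightarrow> bool" where
  "lpls_on S ll le tau \<longleftrightarrow>
     causal_space_on S ll le \<and>
     lsc_on (S \<times> S) (\<lambda>(x,y). tau x y) \<and>
     (\<forall>x\<in>S. \<forall>y\<in>S. \<forall>z\<in>S. le x y \<longrightarrow> le y z \<longrightarrow> tau x z \<ge> tau x y + tau y z) \<and>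
     (\<forall>x\<in>S. \<forall>y\<in>S. \<not> le x y \<longrightarrow> tau x y = 0) \<and>
     (\<forall>x\<in>S. \<forall>y\<in>S. tau x y > 0 \<longleftrightarrow> ll x y)"

abbreviation lpls :: "('a::metric_space \<Rightarrow> 'a \<Rightarrow> bool) \<Rightarrow> ('a \<Rightarrow> 'a \<Rightarrow> bool)
    \<Rightarrow> ('a \<Rightarrow> 'a \<Rightarrow> ennreal) \<Rightarrow> bool" where
  "lpls ll le tau \<equiv> lpls_on UNIV ll le tau"

definition Ifut :: "('a \<Rightarrow> 'a \<Rightarrow> bool) \<Rightarrow> 'a \<Rightarrow> 'a set" where "Ifut ll x = {y. ll x y}"
definition Ipast :: "('a \<Rightarrow> 'a \<Rightarrow> bool) \<Rightarrow> 'a \<Rightarrow> 'a set" where "Ipast ll x = {y. ll y x}"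
definition Jfut :: "('a \<Rightarrow> 'a \<Rightarrow> bool) \<Rightarrow> 'a \<Rightarrow> 'a set" where "Jfut le x = {y. le x y}"
definition Jpast :: "('a \<Rightarrow> 'a \<Rightarrow> bool) \<Rightarrow> 'a \<Rightarrow> 'a set" where "Jpast le x = {y. le y x}"

definition fd_causal_curve :: "('a::metric_space \<Rightarrow> 'a \<Rightarrow> bool) \<Rightarrow> real set \<Rightarrow> (real \<Rightarrow> 'a) \<Rightarrow> bool" where
  "fd_causal_curve le I \<gamma> \<longleftrightarrow> is_interval I \<and> (\<exists>C. C-lipschitz_on I \<gamma>) \<and>
     (\<exists>s\<in>I. \<exists>t\<in>I. \<gamma> s \<noteq> \<gamma> t) \<and> (\<forall>s\<in>I. \<forall>t\<in>I. s < t \<longrightarrow> le (\<gamma> s) (\<gamma> t))"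

definition fd_timelike_curve :: "('a::metric_space \<Rightarrow> 'a \<Rightarrow> bool) \<Rightarrow> real set \<Rightarrow> (real \<Rightarrow> 'a) \<Rightarrow> bool" where
  "fd_timelike_curve ll I \<gamma> \<longleftrightarrow> is_interval I \<and> (\<exists>C. C-lipschitz_on I \<gamma>) \<and>
     (\<exists>s\<in>I. \<exists>t\<in>I. \<gamma> s \<noteq> \<gamma> t) \<and> (\<forall>s\<in>I. \<forall>t\<in>I. s < t \<longrightarrow> ll (\<gamma> s) (\<gamma> t))"

definition causal_curve_from_to :: "('a::metric_space \<Rightarrow> 'a \<Rightarrow> bool) \<Rightarrow> real \<Rightarrow> real \<Rightarrow> (real \<Rightarrow> 'a) \<Rightarrow> 'a \<Rightarrow> 'a \<Rightarrow> bool" where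
  "causal_curve_from_to le a b \<gamma> p q \<longleftrightarrow> a < b \<and> fd_causal_curve le {a..b} \<gamma> \<and> \<gamma> a = p \<and> \<gamma> b = q"

definition timelike_curve_from_to :: "('a::metric_space \<Rightarrow> 'a \<Rightarrow> bool) \<Rightarrow> real \<Rightarrow> real \<Rightarrow> (real \<Rightarrow> 'a) \<Rightarrow> 'a \<Rightarrow> 'a \<Rightarrow> bool" where
  "timelike_curve_from_to ll a b \<gamma> p q \<longleftrightarrow> a < b \<and> fd_timelike_curve ll {a..b} \<gamma> \<and> \<gamma> a = p \<and> \<gamma> b = q"

definition partition :: "real \<Rightarrow> real \<Rightarrow> nat \<Rightarrow> (nat \<Rightarrow> real) \<Rightarrow> bool" where
  "partition a b N t \<longleftrightarrow> N \<ge> 1 \<and> t 0 = a \<and> t N = b \<and> (\<forall>i<N. t i < t (Suc i))"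

definition L_tau :: "('a \<Rightarrow> 'a \<Rightarrow> ennreal) \<Rightarrow> real \<Rightarrow> real \<Rightarrow> (real \<Rightarrow> 'a) \<Rightarrow> ennreal" where
  "L_tau tau a b \<gamma> = Inf {(\<Sum>i<N. tau (\<gamma> (t i)) (\<gamma> (t (Suc i)))) | N t. partition a b N t}"

definition arclength :: "real set \<Rightarrow> (real \<Rightarrow> 'a::metric_space) \<Rightarrow> ennreal" where
  "arclength I \<gamma> = Sup {(\<Sum>i<N. ennreal (dist (\<gamma> (t i)) (\<gamma> (t (Suc i))))) | N t.
       (\<forall>i\<le>N. t i \<in> I) \<and> (\<forall>i<N. t i < t (Suc i))}"

definition causally_path_connected :: "('a::metric_space \<Rightarrow> 'a \<Rightarrow> bool) \<Rightarrow> ('a \<Rightarrow> 'a \<Rightarrow> bool) \<Rightarrow> bool" where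
  "causally_path_connected ll le \<longleftrightarrow>
     (\<forall>x y. le x y \<and> x \<noteq> y \<longrightarrow> (\<exists>a b \<gamma>. causal_curve_from_to le a b \<gamma> x y)) \<and>
     (\<forall>x y. ll x y \<longrightarrow> (\<exists>a b \<gamma>. timelike_curve_from_to ll a b \<gamma> x y))"

definition le_in :: "('a::metric_space \<Rightarrow> 'a \<Rightarrow> bool) \<Rightarrow> 'a set \<Rightarrow> 'a \<Rightarrow> 'a \<Rightarrow> bool" where
  "le_in le U p q \<longleftrightarrow> p = q \<or> (\<exists>a b \<gamma>. causal_curve_from_to le a b \<gamma> p q \<and> \<gamma> ` {a..b} \<subseteq> U)"

definition causally_closed_nbhd :: "('a::metric_space \<Rightarrow> 'a \<Rightarrow> bool) \<Rightarrow> 'a set \<Rightarrow> bool" where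
  "causally_closed_nbhd le U \<longleftrightarrow>
     (\<forall>P Q p q. (\<forall>n. le_in le U (P n) (Q n)) \<and> P \<longlonglongrightarrow> p \<and> Q \<longlonglongrightarrow> q \<and> p \<in> U \<and> q \<in> U
        \<longrightarrow> le_in le U p q)"

definition locally_causally_closed :: "('a::metric_space \<Rightarrow> 'a \<Rightarrow> bool) \<Rightarrow> bool" where
  "locally_causally_closed le \<longleftrightarrow> (\<forall>x. \<exists>U. open U \<and> x \<in> U \<and> causally_closed_nbhd le U)"

definition localizable :: "('a::metric_space \<Rightarrow> 'a \<Rightarrow> bool) \<Rightarrow> ('a \<Rightarrow> 'a \<Rightarrow> bool)
    \<Rightarrow> ('a \<Rightarrow> 'a \<Rightarrow> ennreal) \<Rightarrow> bool" where
  "localizable ll le tau \<longleftrightarrow> (\<forall>x. \<exists>\<Omega> (\<omega>::'a \<Rightarrow> 'a \<Rightarrow> real). x \<in> interior \<Omega> \<and>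
     \<comment> \<open>(i)\<close>
     (\<exists>C::real. \<forall>I \<gamma>. fd_causal_curve le I \<gamma> \<and> \<gamma> ` I \<subseteq> \<Omega> \<longrightarrow> arclength I \<gamma> \<le> ennreal C) \<and>
     \<comment> \<open>(ii)\<close>
     continuous_on (\<Omega> \<times> \<Omega>) (\<lambda>(p,q). \<omega> p q) \<and> (\<forall>p\<in>\<Omega>. \<forall>q\<in>\<Omega>. \<omega> p q \<ge> 0) \<and>
     lpls_on \<Omega> ll le (\<lambda>p q. ennreal (\<omega> p q)) \<and>
     (\<forall>y\<in>\<Omega>. Ifut ll y \<inter> \<Omega> \<noteq> {} \<and> Ipast ll y \<inter> \<Omega> \<noteq> {}) \<and>
     \<comment> \<open>(iii)\<close>
     (\<forall>p\<in>\<Omega>. \<forall>q\<in>\<Omega>. le p q \<and> p \<noteq> q \<longrightarrow>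
        (\<exists>a b \<gamma>. causal_curve_from_to le a b \<gamma> p q \<and>
           (\<forall>a' b' \<gamma>'. causal_curve_from_to le a' b' \<gamma>' p q \<and> \<gamma>' ` {a'..b'} \<subseteq> \<Omega> \<longrightarrow>
               L_tau tau a' b' \<gamma>' \<le> L_tau tau a b \<gamma>) \<and>
           L_tau tau a b \<gamma> = ennreal (\<omega> p q))))"

definition lorentzian_length_space :: "('a::metric_space \<Rightarrow> 'a \<Rightarrow> bool) \<Rightarrow> ('a \<Rightarrow> 'a \<Rightarrow> bool)
    \<Rightarrow> ('a \<Rightarrow> 'a \<Rightarrow> ennreal) \<Rightarrow> bool" where
  "lorentzian_length_space ll le tau \<longleftrightarrow>
     lpls ll le tau \<and> causally_path_connected ll le \<and> locally_causally_closed le \<and>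
     localizable ll le tau \<and>
     (\<forall>x y. tau x y = Sup {L_tau tau a b \<gamma> | a b \<gamma>. causal_curve_from_to le a b \<gamma> x y})"

definition causal :: "('a \<Rightarrow> 'a \<Rightarrow> bool) \<Rightarrow> bool" where
  "causal le \<longleftrightarrow> (\<forall>x y. le x y \<and> le y x \<longrightarrow> x = y)"

definition non_totally_imprisoning :: "('a::metric_space \<Rightarrow> 'a \<Rightarrow> bool) \<Rightarrow> bool" where
  "non_totally_imprisoning le \<longleftrightarrow> (\<forall>K. compact K \<longrightarrow> (\<exists>C::real. C \<ge> 0 \<and>
      (\<forall>I \<gamma>. fd_causal_curve le I \<gamma> \<and> \<gamma> ` I \<subseteq> K \<longrightarrow> arclength I \<gamma> \<le> ennreal C)))"

definition globally_hyperbolic :: "('a::metric_space \<Rightarrow> 'a \<Rightarrow> bool) \<Rightarrow> bool" where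
  "globally_hyperbolic le \<longleftrightarrow> non_totally_imprisoning le \<and>
     (\<forall>x y. compact (Jfut le x \<inter> Jpast le y))"

definition causally_simple :: "('a::topological_space \<Rightarrow> 'a \<Rightarrow> bool) \<Rightarrow> bool" where
  "causally_simple le \<longleftrightarrow> causal le \<and> (\<forall>x. closed (Jfut le x) \<and> closed (Jpast le x))"

definition distinguishing :: "('a \<Rightarrow> 'a \<Rightarrow> bool) \<Rightarrow> bool" where
  "distinguishing ll \<longleftrightarrow> (\<forall>x y. Ifut ll x = Ifut ll y \<longrightarrow> x = y) \<and>
                         (\<forall>x y. Ipast ll x = Ipast ll y \<longrightarrow> x = y)"

definition reflective :: "('a \<Rightarrow> 'a \<Rightarrow> bool) \<Rightarrow> bool" where
  "reflective ll \<longleftrightarrow> (\<forall>x y. (Ifut ll x \<subseteq> Ifut ll y \<longrightarrow> Ipast ll y \<subseteq> Ipast ll x) \<and>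
                             (Ipast ll y \<subseteq> Ipast ll x \<longrightarrow> Ifut ll x \<subseteq> Ifut ll y))"

definition causally_continuous :: "('a \<Rightarrow> 'a \<Rightarrow> bool) \<Rightarrow> bool" where
  "causally_continuous ll \<longleftrightarrow> distinguishing ll \<and> reflective ll"

definition Kplus :: "('a::topological_space \<Rightarrow> 'a \<Rightarrow> bool) \<Rightarrow> ('a \<times> 'a) set" where
  "Kplus le = \<Inter> {R. trans R \<and> closed R \<and> {(x,y). le x y} \<subseteq> R}"

definition stably_causal :: "('a::topological_space \<Rightarrow> 'a \<Rightarrow> bool) \<Rightarrow> bool" where
  "stably_causal le \<longleftrightarrow> antisym (Kplus le)"

definition strongly_causal :: "('a::topological_space \<Rightarrow> 'a \<Rightarrow> bool) \<Rightarrow> bool" where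
  "strongly_causal ll \<longleftrightarrow>
     (\<forall>U. generate_topology {Ifut ll x \<inter> Ipast ll y | x y. True} U \<longleftrightarrow> open U)"

end

theory Submission
  imports Defs
begin

(* Three properties of a Lorentzian length space carry the whole argument: the chronological
  future and past I^+(x), I^-(x) are open (lower semicontinuity of tau), x lies in the closure
  of both (timelike curves leave x), and a causal relation followed by a timelike one is timelike
  (reverse triangle inequality).

  A causal loop through x \<noteq> y can be traversed back and forth forever inside a compact set,
  which non-total imprisonment forbids; closedness of J^+(x) and J^-(x) follows from compactness
  of causal diamonds.  In a causally simple space I^+(x) \<subseteq> I^+(y) forces y \<le> x, which gives
  distinction and reflectivity.  In a causally continuous space the relation I^+(y) \<subseteq> I^+(x)
  is closed, transitive and contains J^+, hence contains K^+, and it is antisymmetric.  Finally,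
  if no diamond I^+(x) \<inter> I^-(y) around p fits into a neighbourhood of p, timelike curves between
  points x_n << p << y_n with x_n, y_n \<rightarrow> p cross a small compact sphere around p at points w_n;
  a limit point l of the w_n satisfies (p, l), (l, p) \<in> K^+, contradicting stable causality. *)

lemma open_lsc_superlevel:
  fixes f :: "'a::metric_space \<times> 'a \<Rightarrow> ennreal"
  assumes "lsc_on UNIV f" "continuous_on UNIV g"
  shows "open {y. c < f (g y)}"
proof (rule Topological_Spaces.openI)
  fix y assume "y \<in> {y. c < f (g y)}"
  then have "\<exists>U. open U \<and> g y \<in> U \<and> (\<forall>w\<in>U \<inter> UNIV. c < f w)"
    using assms(1) by (simp add: lsc_on_def del: split_paired_All)
  then obtain U where U: "open U" "g y \<in> U" "\<forall>w\<in>U. c < f w" by blast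
  have "open (g -` U)" using U(1) assms(2) by (rule open_vimage)
  moreover have "g -` U \<subseteq> {y. c < f (g y)}" using U(3) by blast
  ultimately show "\<exists>T. open T \<and> y \<in> T \<and> T \<subseteq> {y. c < f (g y)}" using U(2) by blast
qed

lemma closed_Kplus: "closed (Kplus le)"
  unfolding Kplus_def by (intro closed_Inter) blast

lemma Kplus_least: "trans R \<Longrightarrow> closed R \<Longrightarrow> {(x, y). le x y} \<subseteq> R \<Longrightarrow> Kplus le \<subseteq> R"
  unfolding Kplus_def by blast

lemma Kplus_if_le_limits:
  assumes "\<And>n. le (P n) (Q n)" "P \<longlonglongrightarrow> p" "Q \<longlonglongrightarrow> q"
  shows "(p, q) \<in> Kplus le"
proof (rule closed_sequentially[OF closed_Kplus])
  show "(P n, Q n) \<in> Kplus le" for n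
    using assms(1) unfolding Kplus_def by blast
  show "(\<lambda>n. (P n, Q n)) \<longlonglongrightarrow> (p, q)"
    using assms(2,3) by (rule tendsto_Pair)
qed

lemma Kplus_cycle_at_limit:
  fixes W :: "nat \<Rightarrow> 'a::metric_space"
  assumes "compact S" "\<And>n. W n \<in> S" "\<And>n. le (X n) (W n)" "\<And>n. le (W n) (Y n)"
    and "X \<longlonglongrightarrow> p" "Y \<longlonglongrightarrow> p"
  obtains l where "l \<in> S" "(p, l) \<in> Kplus le" "(l, p) \<in> Kplus le"
proof -
  obtain l r where "l \<in> S" "strict_mono r" "(W \<circ> r) \<longlonglongrightarrow> l"
    using compact_imp_seq_compact[OF assms(1)] allI[OF assms(2)] by (rule seq_compactE)
  have "(p, l) \<in> Kplus le"
  proof (rule Kplus_if_le_limits[where P = "X \<circ> r" and Q = "W \<circ> r"])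
    show "le ((X \<circ> r) n) ((W \<circ> r) n)" for n
      using assms(3) by simp
  qed (use LIMSEQ_subseq_LIMSEQ[OF assms(5) \<open>strict_mono r\<close>] \<open>(W \<circ> r) \<longlonglongrightarrow> l\<close> in auto)
  moreover have "(l, p) \<in> Kplus le"
  proof (rule Kplus_if_le_limits[where P = "W \<circ> r" and Q = "Y \<circ> r"])
    show "le ((W \<circ> r) n) ((Y \<circ> r) n)" for n
      using assms(4) by simp
  qed (use LIMSEQ_subseq_LIMSEQ[OF assms(6) \<open>strict_mono r\<close>] \<open>(W \<circ> r) \<longlonglongrightarrow> l\<close> in auto)
  ultimately show thesis
    using that \<open>l \<in> S\<close> by blast
qed

lemma arclength_ge_sum:
  assumes "\<And>i. i \<le> N \<Longrightarrow> t i \<in> I" "\<And>i. i < N \<Longrightarrow> t i < t (Suc i)"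
  shows "(\<Sum>i<N. ennreal (dist (\<gamma> (t i)) (\<gamma> (t (Suc i))))) \<le> arclength I \<gamma>"
  unfolding arclength_def using assms by (intro Sup_upper) blast

lemma arclength_alternating_ge:
  fixes g :: "real \<Rightarrow> 'a::metric_space"
  assumes "\<And>n. g (real n) = (if even n then x else y)"
  shows "ennreal (real N * dist x y) \<le> arclength {0..} g"
proof -
  have "dist (g (real i)) (g (real (Suc i))) = dist x y" for i
    using assms[of i] assms[of "Suc i"] by (auto simp: dist_commute)
  then have "ennreal (real N * dist x y) = (\<Sum>i<N. ennreal (dist (g (real i)) (g (real (Suc i)))))"
    by (simp add: ennreal_mult ennreal_of_nat_eq_real_of_nat)
  also have "\<dots> \<le> arclength {0..} g"
    by (rule arclength_ge_sum) auto
  finally show ?thesis .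
qed

lemma abs_cos_diff_le: "\<bar>cos u - cos v\<bar> \<le> \<bar>u - v\<bar>" for u v :: real
proof -
  have "\<bar>cos u - cos v\<bar> = 2 * (\<bar>sin ((u + v) / 2)\<bar> * \<bar>sin ((v - u) / 2)\<bar>)"
    by (simp add: cos_diff_cos abs_mult)
  also have "\<dots> \<le> 2 * (1 * (\<bar>u - v\<bar> / 2))"
    using abs_sin_x_le_abs_x[of "(v - u) / 2"] by (intro mult_left_mono mult_mono) auto
  finally show ?thesis by simp
qed

lemma lipschitz_oscillation:
  fixes a b :: real
  assumes "a \<le> b"
  obtains h C where "C-lipschitz_on UNIV h" "\<And>t. h t \<in> {a..b}"
    "\<And>n. h (real n) = (if even n then a else b)"
proof
  define h where "h t = a + (b - a) * ((1 - cos (pi * t)) / 2)" for t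
  show "((b - a) / 2 * pi)-lipschitz_on UNIV h"
  proof (rule lipschitz_onI)
    fix s t :: real
    have "h s - h t = (b - a) / 2 * (cos (pi * t) - cos (pi * s))"
      by (simp add: h_def field_simps)
    moreover have "0 \<le> (b - a) / 2"
      using assms by simp
    ultimately have "dist (h s) (h t) = (b - a) / 2 * \<bar>cos (pi * t) - cos (pi * s)\<bar>"
      by (simp only: dist_real_def abs_mult abs_of_nonneg)
    also have "\<dots> \<le> (b - a) / 2 * \<bar>pi * t - pi * s\<bar>"
      using assms by (intro mult_left_mono abs_cos_diff_le) auto
    also have "\<dots> = (b - a) / 2 * pi * dist s t"
      by (simp add: dist_real_def abs_mult flip: right_diff_distrib) (simp add: abs_minus_commute)
    finally show "dist (h s) (h t) \<le> (b - a) / 2 * pi * dist s t" .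
  qed (use assms in simp)
  show "h t \<in> {a..b}" for t
  proof -
    have "0 \<le> (1 - cos (pi * t)) / 2" "(1 - cos (pi * t)) / 2 \<le> 1" by simp_all
    then show ?thesis
      using assms mult_left_mono[of "(1 - cos (pi * t)) / 2" 1 "b - a"] by (auto simp: h_def)
  qed
  show "h (real n) = (if even n then a else b)" for n
    by (simp add: h_def field_simps)
qed

lemma locally_compact_space_compact_cball:
  fixes p :: "'a::metric_space"
  assumes "locally_compact_space (euclidean :: 'a topology)"
  obtains e where "0 < e" "compact (cball p e)"
proof -
  have "\<exists>V K. openin euclidean V \<and> compactin euclidean K \<and> p \<in> V \<and> V \<subseteq> K"
    using assms unfolding locally_compact_space_def by simp
  then obtain V K where "open V" "compact K" "p \<in> V" "V \<subseteq> K"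
    by (metis compactin_euclidean_iff open_openin)
  then obtain e where "0 < e" "cball p e \<subseteq> K"
    by (meson open_contains_cball order_trans)
  moreover have "compact (K \<inter> cball p e)"
    using \<open>compact K\<close> closed_cball by (rule compact_Int_closed)
  ultimately show thesis
    using that by (simp add: Int_absorb1)
qed

lemma closed_metric_sphere: "closed (sphere p r)" for p :: "'a::metric_space"
  unfolding sphere_def by (intro closed_Collect_eq continuous_intros)

lemma locally_compact_space_compact_sphere:
  fixes p :: "'a::metric_space"
  assumes "locally_compact_space (euclidean :: 'a topology)" "0 < \<epsilon>"
  obtains \<delta> where "0 < \<delta>" "\<delta> < \<epsilon>" "compact (sphere p \<delta>)"
proof -
  obtain e where "0 < e" "compact (cball p e)"
    using assms(1) by (rule locally_compact_space_compact_cball)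
  define \<delta> where "\<delta> = min e \<epsilon> / 2"
  have "0 < \<delta>" "\<delta> < \<epsilon>" and sphere_cball: "sphere p \<delta> \<subseteq> cball p e"
    using \<open>0 < e\<close> assms(2) by (auto simp: \<delta>_def)
  have "compact (cball p e \<inter> sphere p \<delta>)"
    using \<open>compact (cball p e)\<close> closed_metric_sphere by (rule compact_Int_closed)
  then have "compact (sphere p \<delta>)"
    by (simp only: Int_absorb1[OF sphere_cball])
  with \<open>0 < \<delta>\<close> \<open>\<delta> < \<epsilon>\<close> show thesis
    by (rule that)
qed

lemma mem_closure_imp_sequence_in_ball:
  fixes x :: "'a::metric_space"
  assumes "x \<in> closure S" "0 < \<delta>"
  obtains X where "\<And>n. X n \<in> S \<inter> ball x \<delta>" "X \<longlonglongrightarrow> x"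
proof -
  have "x \<in> closure (S \<inter> ball x \<delta>)"
    using open_Int_closure_subset[OF open_ball, of x \<delta> S] assms by (auto simp: Int_commute)
  then show thesis
    using that unfolding closure_sequential by blast
qed

locale lorentzian_pre_length_space =
  fixes ll le :: "'a::metric_space \<Rightarrow> 'a \<Rightarrow> bool" and tau :: "'a \<Rightarrow> 'a \<Rightarrow> ennreal"
  assumes lpls: "lpls ll le tau"
begin

lemma causal_space: "causal_space_on UNIV ll le"
  using lpls unfolding lpls_on_def by (rule conjunct1)

lemma le_trans: "le x y \<Longrightarrow> le y z \<Longrightarrow> le x z"
  using causal_space unfolding causal_space_on_def by blast

lemma le_refl: "le x x"
  using causal_space unfolding causal_space_on_def by blast

lemma ll_imp_le: "ll x y \<Longrightarrow> le x y"
  using causal_space unfolding causal_space_on_def by blast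

lemma tau_pos_iff: "0 < tau x y \<longleftrightarrow> ll x y"
  using lpls unfolding lpls_on_def by blast

lemma tau_reverse_triangle: "le x y \<Longrightarrow> le y z \<Longrightarrow> tau x y + tau y z \<le> tau x z"
  using lpls unfolding lpls_on_def by blast

lemma lsc_tau: "lsc_on UNIV (\<lambda>(x, y). tau x y)"
  using lpls by (simp add: lpls_on_def)

lemma le_ll_trans:
  assumes "le x y" "ll y z"
  shows "ll x z"
proof -
  have "0 < tau y z" using assms(2) tau_pos_iff by blast
  also have "\<dots> \<le> tau x y + tau y z" by simp
  also have "\<dots> \<le> tau x z" using assms ll_imp_le tau_reverse_triangle by blast
  finally show ?thesis using tau_pos_iff by blast
qed

lemma ll_le_trans:
  assumes "ll x y" "le y z"
  shows "ll x z"
proof -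
  have "0 < tau x y" using assms(1) tau_pos_iff by blast
  also have "\<dots> \<le> tau x y + tau y z" by simp
  also have "\<dots> \<le> tau x z" using assms ll_imp_le tau_reverse_triangle by blast
  finally show ?thesis using tau_pos_iff by blast
qed

lemma ll_trans: "ll x y \<Longrightarrow> ll y z \<Longrightarrow> ll x z"
  using le_ll_trans ll_imp_le by blast

lemma le_along_causal_curve:
  fixes c :: "real \<Rightarrow> 'a"
  assumes "\<forall>s\<in>{a..b}. \<forall>t\<in>{a..b}. s < t \<longrightarrow> le (c s) (c t)"
    and "s \<in> {a..b}" "t \<in> {a..b}" "s \<le> t"
  shows "le (c s) (c t)"
proof (cases "s = t")
  case False
  then have "s < t" using assms(4) by simp
  then show ?thesis using assms(1-3) by blast
qed (simp add: le_refl)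

lemma le_on_causal_loop:
  fixes c :: "real \<Rightarrow> 'a"
  assumes mono: "\<forall>s\<in>{a..b}. \<forall>t\<in>{a..b}. s < t \<longrightarrow> le (c s) (c t)"
    and "le (c b) (c a)" "s \<in> {a..b}" "t \<in> {a..b}"
  shows "le (c s) (c t)"
proof -
  have "le (c s) (c b)"
    using le_along_causal_curve[OF mono, of s b] assms(3) by simp
  then have "le (c s) (c a)"
    using assms(2) by (rule le_trans)
  moreover have "le (c a) (c t)"
    using le_along_causal_curve[OF mono, of a t] assms(4) by simp
  ultimately show ?thesis
    by (rule le_trans)
qed

lemma open_Ifut: "open (Ifut ll x)"
proof -
  have "Ifut ll x = {y. 0 < (\<lambda>(u, v). tau u v) (x, y)}"
    by (auto simp: Ifut_def tau_pos_iff)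
  then show ?thesis
    by (simp only: open_lsc_superlevel[OF lsc_tau] continuous_on_Pair continuous_on_const continuous_on_id)
qed

lemma open_Ipast: "open (Ipast ll x)"
proof -
  have "Ipast ll x = {y. 0 < (\<lambda>(u, v). tau u v) (y, x)}"
    by (auto simp: Ipast_def tau_pos_iff)
  then show ?thesis
    by (simp only: open_lsc_superlevel[OF lsc_tau] continuous_on_Pair continuous_on_const continuous_on_id)
qed

lemma Ipast_subset_if_mem_closure_Ipast:
  assumes "x \<in> closure (Ipast ll w)"
  shows "Ipast ll x \<subseteq> Ipast ll w"
proof
  fix q assume "q \<in> Ipast ll x"
  then have "x \<in> Ifut ll q" by (simp add: Ipast_def Ifut_def)
  then obtain v where "v \<in> Ifut ll q" "v \<in> Ipast ll w"
    using assms open_Ifut by (meson open_Int_closure_eq_empty disjoint_iff)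
  then show "q \<in> Ipast ll w" by (auto simp: Ifut_def Ipast_def intro: ll_trans)
qed

end

(* Of localizability, only the non-emptiness of I^+(x) and I^-(x) enters the argument. *)
locale causally_path_connected_lpls = lorentzian_pre_length_space +
  assumes causally_path_connected: "causally_path_connected ll le"
    and ex_ll_future: "\<exists>y. ll x y"
    and ex_ll_past: "\<exists>y. ll y x"
begin

lemma timelike_curveE:
  assumes "ll x y"
  obtains a b :: real and \<gamma> where "a < b" "continuous_on {a..b} \<gamma>" "\<gamma> a = x" "\<gamma> b = y"
    "\<And>s t. s \<in> {a..b} \<Longrightarrow> t \<in> {a..b} \<Longrightarrow> s < t \<Longrightarrow> ll (\<gamma> s) (\<gamma> t)"
proof -
  obtain a b \<gamma> where "timelike_curve_from_to ll a b \<gamma> x y"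
    using assms causally_path_connected unfolding causally_path_connected_def by blast
  then obtain C where "a < b" "C-lipschitz_on {a..b} \<gamma>" "\<gamma> a = x" "\<gamma> b = y"
    "\<forall>s\<in>{a..b}. \<forall>t\<in>{a..b}. s < t \<longrightarrow> ll (\<gamma> s) (\<gamma> t)"
    unfolding timelike_curve_from_to_def fd_timelike_curve_def by blast
  then show thesis
    by (intro that[of a b \<gamma>]) (auto intro: lipschitz_on_continuous_on)
qed

lemma ll_dense:
  assumes "ll x z"
  obtains y where "ll x y" "ll y z"
proof -
  obtain a b :: real and \<gamma> where ab: "a < b" and "continuous_on {a..b} \<gamma>" "\<gamma> a = x" "\<gamma> b = z"
    and tl: "\<And>s t. s \<in> {a..b} \<Longrightarrow> t \<in> {a..b} \<Longrightarrow> s < t \<Longrightarrow> ll (\<gamma> s) (\<gamma> t)"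
    using assms by (erule timelike_curveE)
  then show thesis
    using that tl[of a "(a + b) / 2"] tl[of "(a + b) / 2" b] by auto
qed

lemma mem_closure_Ifut: "x \<in> closure (Ifut ll x)"
proof -
  obtain y where "ll x y" using ex_ll_future by blast
  then obtain a b :: real and \<gamma> where ab: "a < b" and cont: "continuous_on {a..b} \<gamma>" and "\<gamma> a = x" "\<gamma> b = y"
    and tl: "\<And>s t. s \<in> {a..b} \<Longrightarrow> t \<in> {a..b} \<Longrightarrow> s < t \<Longrightarrow> ll (\<gamma> s) (\<gamma> t)"
    by (erule timelike_curveE)
  have "x \<in> \<gamma> ` closure {a<..b}"
    using ab \<open>\<gamma> a = x\<close> by auto
  also have "\<dots> \<subseteq> closure (\<gamma> ` {a<..b})"
    using ab cont by (intro image_closure_subset closure_subset) auto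
  also have "\<dots> \<subseteq> closure (Ifut ll x)"
    using ab tl \<open>\<gamma> a = x\<close> by (intro closure_mono) (auto simp: Ifut_def)
  finally show ?thesis .
qed

lemma mem_closure_Ipast: "x \<in> closure (Ipast ll x)"
proof -
  obtain y where "ll y x" using ex_ll_past by blast
  then obtain a b :: real and \<gamma> where ab: "a < b" and cont: "continuous_on {a..b} \<gamma>" and "\<gamma> a = y" "\<gamma> b = x"
    and tl: "\<And>s t. s \<in> {a..b} \<Longrightarrow> t \<in> {a..b} \<Longrightarrow> s < t \<Longrightarrow> ll (\<gamma> s) (\<gamma> t)"
    by (erule timelike_curveE)
  have "x \<in> \<gamma> ` closure {a..<b}"
    using ab \<open>\<gamma> b = x\<close> by auto
  also have "\<dots> \<subseteq> closure (\<gamma> ` {a..<b})"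
    using ab cont by (intro image_closure_subset closure_subset) auto
  also have "\<dots> \<subseteq> closure (Ipast ll x)"
    using ab tl \<open>\<gamma> b = x\<close> by (intro closure_mono) (auto simp: Ipast_def)
  finally show ?thesis .
qed

lemma ll_intermediate_value:
  fixes f :: "'a \<Rightarrow> real"
  assumes "ll x z" "continuous_on UNIV f" "f x \<le> c" "c \<le> f z"
  obtains w where "f w = c" "le x w" "le w z"
proof -
  obtain a b :: real and \<gamma> where ab: "a < b" and cont: "continuous_on {a..b} \<gamma>" and "\<gamma> a = x" "\<gamma> b = z"
    and tl: "\<And>s t. s \<in> {a..b} \<Longrightarrow> t \<in> {a..b} \<Longrightarrow> s < t \<Longrightarrow> ll (\<gamma> s) (\<gamma> t)"
    using assms(1) by (erule timelike_curveE)
  have "continuous_on {a..b} (\<lambda>s. f (\<gamma> s))"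
    using assms(2) cont by (rule continuous_on_compose2) simp
  then obtain s where s: "a \<le> s" "s \<le> b" "f (\<gamma> s) = c"
    using IVT'[of "\<lambda>s. f (\<gamma> s)" a c b] ab assms(3,4) \<open>\<gamma> a = x\<close> \<open>\<gamma> b = z\<close> by auto
  have "le x (\<gamma> s)"
    using tl[of a s] s ab \<open>\<gamma> a = x\<close> by (cases "s = a") (auto simp: le_refl ll_imp_le)
  moreover have "le (\<gamma> s) z"
    using tl[of s b] s ab \<open>\<gamma> b = z\<close> by (cases "s = b") (auto simp: le_refl ll_imp_le)
  ultimately show thesis
    using that s(3) by blast
qed

lemma causal_loop_imp_oscillating_curve:
  assumes "le x y" "le y x" "x \<noteq> y"
  obtains g K where "fd_causal_curve le {0..} g" "compact K" "g ` {0..} \<subseteq> K"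
    "\<forall>n. g (real n) = (if even n then x else y)"
proof -
  obtain a b c where "causal_curve_from_to le a b c x y"
    using assms causally_path_connected unfolding causally_path_connected_def by blast
  then obtain C where ab: "a < b" and lip: "C-lipschitz_on {a..b} c" and "c a = x" "c b = y"
    and mono: "\<forall>s\<in>{a..b}. \<forall>t\<in>{a..b}. s < t \<longrightarrow> le (c s) (c t)"
    unfolding causal_curve_from_to_def fd_causal_curve_def by blast
  obtain h D where lip_h: "D-lipschitz_on UNIV h" and h_range: "\<And>t. h t \<in> {a..b}"
    and h_nat: "\<And>n. h (real n) = (if even n then a else b)"
    using less_imp_le[OF ab] by (rule lipschitz_oscillation) blast
  define g where "g = c \<circ> h"
  have g_nat: "g (real n) = (if even n then x else y)" for n
    using h_nat \<open>c a = x\<close> \<open>c b = y\<close> by (simp add: g_def)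
  have "fd_causal_curve le {0..} g"
    unfolding fd_causal_curve_def
  proof (intro conjI)
    show "is_interval {0::real..}"
      by (simp add: is_interval_ci)
    have "(C * D)-lipschitz_on {0..} g"
      unfolding g_def using h_range
      by (intro lipschitz_on_compose lipschitz_on_subset[OF lip_h] lipschitz_on_subset[OF lip]) auto
    then show "\<exists>C. C-lipschitz_on {0..} g" by blast
    have "0 \<in> {0::real..}" "1 \<in> {0::real..}" "g 0 \<noteq> g 1"
      using g_nat[of 0] g_nat[of 1] \<open>x \<noteq> y\<close> by simp_all
    then show "\<exists>s\<in>{0..}. \<exists>t\<in>{0..}. g s \<noteq> g t"
      by blast
    show "\<forall>s\<in>{0..}. \<forall>t\<in>{0..}. s < t \<longrightarrow> le (g s) (g t)"
      using le_on_causal_loop[OF mono] \<open>c a = x\<close> \<open>c b = y\<close> assms(2) h_range by (simp add: g_def)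
  qed
  moreover have "compact (c ` {a..b})"
    using lipschitz_on_continuous_on[OF lip] compact_Icc by (rule compact_continuous_image)
  moreover have "g ` {0..} \<subseteq> c ` {a..b}"
    using h_range by (auto simp: g_def)
  ultimately show thesis
    using that g_nat by blast
qed

lemma non_totally_imprisoning_imp_causal:
  assumes "non_totally_imprisoning le"
  shows "causal le"
  unfolding causal_def
proof (intro allI impI, rule ccontr)
  fix x y assume "le x y \<and> le y x" "x \<noteq> y"
  then obtain g K where "fd_causal_curve le {0..} g" "compact K" "g ` {0..} \<subseteq> K"
    and g_nat: "\<forall>n. g (real n) = (if even n then x else y)"
    using causal_loop_imp_oscillating_curve by blast
  then obtain B where "0 \<le> B" "arclength {0..} g \<le> ennreal B"
    using assms unfolding non_totally_imprisoning_def by blast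
  have "real N * dist x y \<le> B" for N
  proof -
    have "ennreal (real N * dist x y) \<le> ennreal B"
      using arclength_alternating_ge[of g x y N] g_nat \<open>arclength {0..} g \<le> ennreal B\<close> by simp
    then show ?thesis
      using \<open>0 \<le> B\<close> by (simp add: ennreal_le_iff)
  qed
  moreover obtain N where "B < real N * dist x y"
    using ex_less_of_nat_mult[of "dist x y" B] \<open>x \<noteq> y\<close> by auto
  ultimately show False
    by (meson not_le)
qed

lemma globally_hyperbolic_imp_closed_Jfut:
  assumes "globally_hyperbolic le"
  shows "closed (Jfut le x)"
proof -
  have "y \<in> Jfut le x" if "y \<in> closure (Jfut le x)" for y
  proof -
    obtain z where "ll y z" using ex_ll_future by blast
    then have "y \<in> Ipast ll z \<inter> closure (Jfut le x)"
      using that by (simp add: Ipast_def)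
    also have "\<dots> \<subseteq> closure (Ipast ll z \<inter> Jfut le x)"
      using open_Ipast by (rule open_Int_closure_subset)
    also have "\<dots> \<subseteq> closure (Jfut le x \<inter> Jpast le z)"
      by (intro closure_mono) (auto simp: Ipast_def Jpast_def ll_imp_le)
    also have "\<dots> = Jfut le x \<inter> Jpast le z"
      using assms by (simp add: globally_hyperbolic_def compact_imp_closed)
    finally show ?thesis by blast
  qed
  then show ?thesis
    using closure_subset_eq by blast
qed

lemma globally_hyperbolic_imp_closed_Jpast:
  assumes "globally_hyperbolic le"
  shows "closed (Jpast le x)"
proof -
  have "y \<in> Jpast le x" if "y \<in> closure (Jpast le x)" for y
  proof -
    obtain z where "ll z y" using ex_ll_past by blast
    then have "y \<in> Ifut ll z \<inter> closure (Jpast le x)"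
      using that by (simp add: Ifut_def)
    also have "\<dots> \<subseteq> closure (Ifut ll z \<inter> Jpast le x)"
      using open_Ifut by (rule open_Int_closure_subset)
    also have "\<dots> \<subseteq> closure (Jfut le z \<inter> Jpast le x)"
      by (intro closure_mono) (auto simp: Ifut_def Jfut_def ll_imp_le)
    also have "\<dots> = Jfut le z \<inter> Jpast le x"
      using assms by (simp add: globally_hyperbolic_def compact_imp_closed)
    finally show ?thesis by blast
  qed
  then show ?thesis
    using closure_subset_eq by blast
qed

lemma globally_hyperbolic_imp_causally_simple:
  "globally_hyperbolic le \<Longrightarrow> causally_simple le"
  unfolding causally_simple_def
  using non_totally_imprisoning_imp_causal globally_hyperbolic_imp_closed_Jfut
    globally_hyperbolic_imp_closed_Jpast globally_hyperbolic_def by blast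

lemma le_if_Ifut_subset:
  assumes "closed (Jfut le y)" "Ifut ll x \<subseteq> Ifut ll y"
  shows "le y x"
proof -
  have "x \<in> closure (Ifut ll y)"
    using mem_closure_Ifut closure_mono[OF assms(2)] by blast
  also have "\<dots> \<subseteq> Jfut le y"
    using assms(1) by (intro closure_minimal) (auto simp: Ifut_def Jfut_def ll_imp_le)
  finally show ?thesis by (simp add: Jfut_def)
qed

lemma le_if_Ipast_subset:
  assumes "closed (Jpast le x)" "Ipast ll y \<subseteq> Ipast ll x"
  shows "le y x"
proof -
  have "y \<in> closure (Ipast ll x)"
    using mem_closure_Ipast closure_mono[OF assms(2)] by blast
  also have "\<dots> \<subseteq> Jpast le x"
    using assms(1) by (intro closure_minimal) (auto simp: Ipast_def Jpast_def ll_imp_le)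
  finally show ?thesis by (simp add: Jpast_def)
qed

lemma causally_simple_imp_causally_continuous:
  assumes "causally_simple le"
  shows "causally_continuous ll"
proof -
  have fut: "le y x" if "Ifut ll x \<subseteq> Ifut ll y" for x y
    using assms that le_if_Ifut_subset by (simp add: causally_simple_def)
  have past: "le y x" if "Ipast ll y \<subseteq> Ipast ll x" for x y
    using assms that le_if_Ipast_subset by (simp add: causally_simple_def)
  have "distinguishing ll"
    using assms fut past unfolding distinguishing_def causally_simple_def causal_def by blast
  moreover have "reflective ll"
    unfolding reflective_def
  proof (intro allI conjI impI)
    fix x y
    assume "Ifut ll x \<subseteq> Ifut ll y"
    then have "le y x" by (rule fut)
    then show "Ipast ll y \<subseteq> Ipast ll x"
      by (auto simp: Ipast_def intro: ll_le_trans)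
  next
    fix x y
    assume "Ipast ll y \<subseteq> Ipast ll x"
    then have "le y x" by (rule past)
    then show "Ifut ll x \<subseteq> Ifut ll y"
      by (auto simp: Ifut_def intro: le_ll_trans)
  qed
  ultimately show ?thesis
    by (simp add: causally_continuous_def)
qed

lemma closed_Ifut_superset_relation:
  assumes "reflective ll"
  shows "closed {(x, y). Ifut ll y \<subseteq> Ifut ll x}" (is "closed ?D")
proof -
  have "Ifut ll y \<subseteq> Ifut ll x" if "(x, y) \<in> closure ?D" for x y
  proof
    fix z assume "z \<in> Ifut ll y"
    then obtain w where "ll y w" "ll w z"
      by (auto simp: Ifut_def elim: ll_dense)
    have "(x, y) \<in> (UNIV \<times> Ipast ll w) \<inter> closure ?D"
      using that \<open>ll y w\<close> by (simp add: Ipast_def)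
    also have "\<dots> \<subseteq> closure ((UNIV \<times> Ipast ll w) \<inter> ?D)"
      by (intro open_Int_closure_subset open_Times open_UNIV open_Ipast)
    also have "\<dots> \<subseteq> closure (Ipast ll w \<times> UNIV)"
      by (intro closure_mono) (auto simp: Ipast_def Ifut_def)
    finally have "x \<in> closure (Ipast ll w)"
      by (simp add: closure_Times)
    then have "Ifut ll w \<subseteq> Ifut ll x"
      using assms Ipast_subset_if_mem_closure_Ipast unfolding reflective_def by blast
    then show "z \<in> Ifut ll x"
      using \<open>ll w z\<close> by (auto simp: Ifut_def)
  qed
  then show ?thesis
    using closure_subset_eq by blast
qed

lemma causally_continuous_imp_stably_causal:
  assumes "causally_continuous ll"
  shows "stably_causal le"
proof -
  let ?D = "{(x, y). Ifut ll y \<subseteq> Ifut ll x}"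
  have "Kplus le \<subseteq> ?D"
  proof (rule Kplus_least)
    show "trans ?D"
      by (auto simp: trans_def)
    show "closed ?D"
      using assms closed_Ifut_superset_relation by (simp add: causally_continuous_def)
    show "{(x, y). le x y} \<subseteq> ?D"
      by (auto simp: Ifut_def intro: le_ll_trans)
  qed
  moreover have "antisym ?D"
    using assms by (auto simp: antisym_def causally_continuous_def distinguishing_def)
  ultimately show ?thesis
    unfolding stably_causal_def by (rule antisym_subset)
qed

lemma diamond_meets_sphere:
  assumes "\<not> Ifut ll x \<inter> Ipast ll y \<subseteq> ball p \<epsilon>" "dist p x \<le> \<delta>" "\<delta> \<le> \<epsilon>"
  obtains w where "w \<in> sphere p \<delta>" "le x w" "le w y"
proof -
  obtain z where "z \<in> Ifut ll x \<inter> Ipast ll y" "z \<notin> ball p \<epsilon>"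
    using assms(1) by blast
  then have "ll x z" "ll z y" "\<epsilon> \<le> dist p z"
    by (auto simp: Ifut_def Ipast_def not_less)
  have "continuous_on UNIV (dist p)"
    by (intro continuous_intros)
  moreover have "\<delta> \<le> dist p z"
    using assms(3) \<open>\<epsilon> \<le> dist p z\<close> by (rule order_trans)
  ultimately obtain w where "dist p w = \<delta>" "le x w" "le w z"
    using \<open>ll x z\<close> assms(2) by (elim ll_intermediate_value)
  moreover have "le w y"
    using \<open>le w z\<close> \<open>ll z y\<close> by (rule ll_imp_le[OF le_ll_trans])
  ultimately show thesis
    using that[of w] by simp
qed

lemma stably_causal_small_diamond:
  assumes "locally_compact_space (euclidean :: 'a topology)" "stably_causal le" "open U" "p \<in> U"
  shows "\<exists>x y. ll x p \<and> ll p y \<and> Ifut ll x \<inter> Ipast ll y \<subseteq> U"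
proof (rule ccontr)
  assume "\<not> ?thesis"
  then have no_diamond: "\<not> Ifut ll x \<inter> Ipast ll y \<subseteq> U" if "ll x p" "ll p y" for x y
    using that by blast
  obtain \<epsilon> where "0 < \<epsilon>" "ball p \<epsilon> \<subseteq> U"
    using assms(3,4) open_contains_ball by blast
  obtain \<delta> where "0 < \<delta>" "\<delta> < \<epsilon>" "compact (sphere p \<delta>)"
    using assms(1) \<open>0 < \<epsilon>\<close> by (rule locally_compact_space_compact_sphere)
  obtain X where X: "\<And>n. X n \<in> Ipast ll p \<inter> ball p \<delta>" "X \<longlonglongrightarrow> p"
    using mem_closure_Ipast[of p] \<open>0 < \<delta>\<close> by (rule mem_closure_imp_sequence_in_ball) blast
  obtain Y where Y: "\<And>n. Y n \<in> Ifut ll p \<inter> ball p \<delta>" "Y \<longlonglongrightarrow> p"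
    using mem_closure_Ifut[of p] \<open>0 < \<delta>\<close> by (rule mem_closure_imp_sequence_in_ball) blast
  have "\<forall>n. \<exists>w. w \<in> sphere p \<delta> \<and> le (X n) w \<and> le w (Y n)"
  proof
    fix n
    have "ll (X n) p" "ll p (Y n)"
      using X(1)[of n] Y(1)[of n] by (simp_all add: Ipast_def Ifut_def)
    then have "\<not> Ifut ll (X n) \<inter> Ipast ll (Y n) \<subseteq> ball p \<epsilon>"
      using no_diamond \<open>ball p \<epsilon> \<subseteq> U\<close> by blast
    moreover have "dist p (X n) \<le> \<delta>" "\<delta> \<le> \<epsilon>"
      using X(1)[of n] \<open>\<delta> < \<epsilon>\<close> by simp_all
    ultimately obtain w where "w \<in> sphere p \<delta>" "le (X n) w" "le w (Y n)"
      by (rule diamond_meets_sphere)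
    then show "\<exists>w. w \<in> sphere p \<delta> \<and> le (X n) w \<and> le w (Y n)"
      by blast
  qed
  then obtain W where W: "\<forall>n. W n \<in> sphere p \<delta> \<and> le (X n) (W n) \<and> le (W n) (Y n)"
    by (rule choice[THEN exE])
  then have "\<And>n. W n \<in> sphere p \<delta>" "\<And>n. le (X n) (W n)" "\<And>n. le (W n) (Y n)"
    by blast+
  with \<open>compact (sphere p \<delta>)\<close> obtain l where "l \<in> sphere p \<delta>" "(p, l) \<in> Kplus le" "(l, p) \<in> Kplus le"
    using X(2) Y(2) by (rule Kplus_cycle_at_limit)
  then have "l = p"
    using assms(2) unfolding stably_causal_def antisym_def by blast
  then show False
    using \<open>l \<in> sphere p \<delta>\<close> \<open>0 < \<delta>\<close> by simp
qed

lemma stably_causal_imp_strongly_causal: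
  assumes "locally_compact_space (euclidean :: 'a topology)" "stably_causal le"
  shows "strongly_causal ll"
proof -
  have "topological_basis {Ifut ll x \<inter> Ipast ll y | x y. True}"
  proof (rule topological_basisI)
    show "open B" if "B \<in> {Ifut ll x \<inter> Ipast ll y | x y. True}" for B
      using that open_Ifut open_Ipast by auto
    fix U and p :: 'a
    assume "open U" "p \<in> U"
    with assms obtain x y where "ll x p" "ll p y" "Ifut ll x \<inter> Ipast ll y \<subseteq> U"
      using stably_causal_small_diamond by blast
    then show "\<exists>B\<in>{Ifut ll x \<inter> Ipast ll y | x y. True}. p \<in> B \<and> B \<subseteq> U"
      by (auto simp: Ifut_def Ipast_def)
  qed
  then show ?thesis
    unfolding strongly_causal_def by (simp add: topological_basis_imp_subbasis)
qed

end

lemma lorentzian_length_space_imp_causally_path_connected_lpls: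
  assumes "lorentzian_length_space ll le tau"
  shows "causally_path_connected_lpls ll le tau"
proof -
  have "lpls ll le tau" "causally_path_connected ll le" and loc: "localizable ll le tau"
    using assms unfolding lorentzian_length_space_def by blast+
  moreover have "\<exists>y. ll x y" "\<exists>y. ll y x" for x
  proof -
    obtain \<Omega> where "x \<in> interior \<Omega>" "\<forall>y\<in>\<Omega>. Ifut ll y \<inter> \<Omega> \<noteq> {} \<and> Ipast ll y \<inter> \<Omega> \<noteq> {}"
      using loc unfolding localizable_def by (elim allE[where x = x] exE conjE) blast
    then have "Ifut ll x \<noteq> {}" "Ipast ll x \<noteq> {}"
      using interior_subset by blast+
    then show "\<exists>y. ll x y" "\<exists>y. ll y x"
      by (auto simp: Ifut_def Ipast_def)
  qed
  ultimately show ?thesis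
    by (intro causally_path_connected_lpls.intro lorentzian_pre_length_space.intro
        causally_path_connected_lpls_axioms.intro)
qed

theorem theorem3p16:
  fixes ll le :: "'a::metric_space \<Rightarrow> 'a \<Rightarrow> bool" and tau :: "'a \<Rightarrow> 'a \<Rightarrow> ennreal"
  assumes "lorentzian_length_space ll le tau"
  shows "(globally_hyperbolic le \<longrightarrow> causally_simple le) \<and>
         (causally_simple le \<longrightarrow> causally_continuous ll) \<and>
         (causally_continuous ll \<longrightarrow> stably_causal le) \<and>
         (locally_compact_space (euclidean :: 'a topology) \<longrightarrow>
            (stably_causal le \<longrightarrow> strongly_causal ll))"
proof -
  interpret causally_path_connected_lpls ll le tau
    using assms by (rule lorentzian_length_space_imp_causally_path_connected_lpls)
  show ?thesis
    using globally_hyperbolic_imp_causally_simple causally_simple_imp_causally_continuous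
      causally_continuous_imp_stably_causal stably_causal_imp_strongly_causal by blast
qed

end
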